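(* Let $R=(V,E_R,w)$ be a connected weighted graph on a vertex set $V$ with $|V|=n\ge 3$ and edge weights in $[0,B]$. Then $$\frac{\mathrm{RS}_f(R)}{\mathrm{GS}_f}=\frac{\max_{S\subset V:\ \exists u\in S,\,v\in V\setminus S,\ \{u,v\}\notin E_R} w_1(S)}{B},$$ where $w_1(S)$ is the minimum weight among edges of $E_R$ crossing the cut $(S,V\setminus S)$.
   Context: For a weighted graph $G$, $f(G)$ denotes the total weight of a minimum spanning tree of $G$. Two graphs on the same vertex set $V$ are edge-weight adjacent if one is obtained from the other by adding one edge $e\in\binom{V}{2}$ not already present, with a weight in $[0,B]$. The global sensitivity $\mathrm{GS}_f$ is the maximum of $|f(G)-f(G')|$ over all pairs of edge-weight adjacent connected graphs on $n$ vertices with edge weights in $[0,B]$. The retain sensitivity is $\mathrm{RS}_f(R)=\max|f((V,E_R))-f((V,E_R\cup\{e\}))|$, the maximum over edges $e\in\binom{V}{2}\setminus E_R$ and over weights $w(e)\in[0,B]$. *)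

theory Defs
  imports Complex_Main
begin

text \<open>Graphs on a vertex set V: edges are 2-element subsets of V.
  Weights are functions on edges (only values on the edge set matter).\<close>

definition edges_on :: "'a set \<Rightarrow> 'a set set" where
  "edges_on V = {e. e \<subseteq> V \<and> card e = 2}"

definition graph_connected :: "'a set \<Rightarrow> 'a set set \<Rightarrow> bool" where
  "graph_connected V E \<longleftrightarrow>
     (\<forall>u\<in>V. \<forall>v\<in>V. (u, v) \<in> {(x, y). {x, y} \<in> E}\<^sup>*)"

definition spanning_tree :: "'a set \<Rightarrow> 'a set set \<Rightarrow> 'a set set \<Rightarrow> bool" where
  "spanning_tree V E T \<longleftrightarrow> T \<subseteq> E \<and> graph_connected V T \<and>
     (\<forall>e\<in>T. \<not> graph_connected V (T - {e}))"

definition mst_weight :: "'a set \<Rightarrow> 'a set set \<Rightarrow> ('a set \<Rightarrow> real) \<Rightarrow> real" where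
  "mst_weight V E w = Min {(\<Sum>e\<in>T. w e) | T. spanning_tree V E T}"

definition weighted_graph :: "'a set \<Rightarrow> 'a set set \<Rightarrow> ('a set \<Rightarrow> real) \<Rightarrow> real \<Rightarrow> bool" where
  "weighted_graph V E w B \<longleftrightarrow> E \<subseteq> edges_on V \<and> (\<forall>e\<in>E. 0 \<le> w e \<and> w e \<le> B)"

definition max_or0 :: "real set \<Rightarrow> real" where
  "max_or0 A = (if A = {} then 0 else Sup A)"

definition GS_mst :: "'a set \<Rightarrow> real \<Rightarrow> real" where
  "GS_mst V B = Sup {\<bar>mst_weight V E w - mst_weight V (insert e E) (w(e := x))\<bar> | E w e x.
      weighted_graph V E w B \<and> graph_connected V E \<and>
      e \<in> edges_on V \<and> e \<notin> E \<and> 0 \<le> x \<and> x \<le> B}"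

definition RS_mst :: "'a set \<Rightarrow> 'a set set \<Rightarrow> ('a set \<Rightarrow> real) \<Rightarrow> real \<Rightarrow> real" where
  "RS_mst V E w B = max_or0 {\<bar>mst_weight V E w - mst_weight V (insert e E) (w(e := x))\<bar> | e x.
      e \<in> edges_on V \<and> e \<notin> E \<and> 0 \<le> x \<and> x \<le> B}"

definition cut_min_weight :: "'a set \<Rightarrow> 'a set set \<Rightarrow> ('a set \<Rightarrow> real) \<Rightarrow> 'a set \<Rightarrow> real" where
  "cut_min_weight V E w S = Min {w e | e. e \<in> E \<and> (\<exists>u\<in>S. \<exists>v\<in>V - S. e = {u, v})}"

end

theory Submission
  imports Defs
begin

(*
  Adding a non-edge e = {u, v} never increases the MST weight. If T is an MST after the
  addition, then T - {e} splits into a part reachable from u and a part reachable from v;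
  if these differ, the cheapest original edge across the cut they define (a cut separating
  the non-edge {u, v}) reconnects them, so the weight drops by at most w_1 of that cut.
  Conversely, for a cut S separated by a non-edge {u, v}, some edge g of an MST T of R
  crosses S and separates u from v in T - {g}; exchanging g for e of weight 0 saves at
  least w_1(S). Hence RS_f(R) is the maximum of w_1(S) over such cuts, which is at most B,
  and a star with all weights B, extended by an edge of weight 0 between two leaves,
  shows GS_f = B.
*)

definition adj :: "'a set set \<Rightarrow> ('a \<times> 'a) set" where
  "adj H = {(x, y). {x, y} \<in> H}"

abbreviation reachable :: "'a set set \<Rightarrow> 'a \<Rightarrow> 'a \<Rightarrow> bool" where
  "reachable H x y \<equiv> (x, y) \<in> (adj H)\<^sup>*"

lemma graph_connected_iff: "graph_connected V H \<longleftrightarrow> (\<forall>u\<in>V. \<forall>v\<in>V. reachable H u v)"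
  unfolding graph_connected_def adj_def ..

lemma reachable_edge: "{x, y} \<in> H \<Longrightarrow> reachable H x y"
  by (simp add: adj_def r_into_rtrancl)

lemma reachable_sym: "reachable H x y \<Longrightarrow> reachable H y x"
proof -
  have "sym (adj H)" by (auto simp: sym_def adj_def insert_commute)
  then show "reachable H x y \<Longrightarrow> reachable H y x" by (meson sym_rtrancl symD)
qed

lemma reachable_mono: "H \<subseteq> H' \<Longrightarrow> reachable H x y \<Longrightarrow> reachable H' x y"
proof -
  assume "H \<subseteq> H'"
  then have "adj H \<subseteq> adj H'" by (auto simp: adj_def)
  then show "reachable H x y \<Longrightarrow> reachable H' x y" using rtrancl_mono by blast
qed

lemma graph_connectedI:
  assumes "c \<in> V" "\<And>y. y \<in> V \<Longrightarrow> reachable H c y"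
  shows "graph_connected V H"
  unfolding graph_connected_iff
proof (intro ballI)
  fix u v assume "u \<in> V" "v \<in> V"
  with assms have "reachable H u c" "reachable H c v" by (auto intro: reachable_sym)
  then show "reachable H u v" by (rule rtrancl_trans)
qed

lemma reachable_crossing_edge:
  assumes "reachable H a b" "a \<in> A" "b \<notin> A"
  obtains p q where "{p, q} \<in> H" "p \<in> A" "q \<notin> A"
  using assms by (induction rule: rtrancl_induct) (auto simp: adj_def)

lemma reachable_Diff_edge:
  assumes "reachable H a b"
  shows "reachable (H - {{p, q}}) a b
    \<or> reachable (H - {{p, q}}) a p \<and> reachable (H - {{p, q}}) q b
    \<or> reachable (H - {{p, q}}) a q \<and> reachable (H - {{p, q}}) p b"
  using assms
proof (induction rule: rtrancl_induct)
  case (step y z)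
  show ?case
  proof (cases "{y, z} = {p, q}")
    case True
    then have "y = p \<and> z = q \<or> y = q \<and> z = p" by (auto simp: doubleton_eq_iff)
    then show ?thesis using step.IH by auto
  next
    case False
    then have "(y, z) \<in> adj (H - {{p, q}})" using step.hyps(2) by (simp add: adj_def)
    then show ?thesis using step.IH by (meson rtrancl.rtrancl_into_rtrancl)
  qed
qed simp

lemma spanning_tree_edge_is_bridge:
  assumes "spanning_tree V E T" "{p, q} \<in> T"
  shows "\<not> reachable (T - {{p, q}}) p q"
proof
  assume pq: "reachable (T - {{p, q}}) p q"
  have "reachable (T - {{p, q}}) a b" if "reachable T a b" for a b
    using reachable_Diff_edge[OF that, of p q]
  proof (elim disjE conjE)
    assume "reachable (T - {{p, q}}) a p" "reachable (T - {{p, q}}) q b"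
    with pq show ?thesis by (meson rtrancl_trans)
  next
    assume "reachable (T - {{p, q}}) a q" "reachable (T - {{p, q}}) p b"
    with reachable_sym[OF pq] show ?thesis by (meson rtrancl_trans)
  qed
  then have "graph_connected V (T - {{p, q}})"
    using assms(1) unfolding spanning_tree_def graph_connected_iff by blast
  with assms show False unfolding spanning_tree_def by blast
qed

lemma reachable_Diff_bridges:
  assumes "finite F" "reachable T u v"
    and "\<forall>g\<in>F. \<exists>p q. g = {p, q} \<and> \<not> reachable (T - {g}) p q"
    and "\<forall>g\<in>F. reachable (T - {g}) u v"
  shows "reachable (T - F) u v"
  using assms(1,3,4)
proof (induction F rule: finite_induct)
  case (insert g F)
  obtain p q where g: "g = {p, q}" and bridge: "\<not> reachable (T - {g}) p q"
    using insert.prems(1) by auto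
  have uv: "reachable (T - {g}) u v" using insert.prems(2) by simp
  have IH: "reachable (T - F) u v" using insert.IH insert.prems by simp
  have mono: "reachable (T - {g}) a b" if "reachable (T - insert g F) a b" for a b
    by (rule reachable_mono[OF _ that]) blast
  have "\<not> (reachable (T - insert g F) u p \<and> reachable (T - insert g F) q v)"
  proof
    assume "reachable (T - insert g F) u p \<and> reachable (T - insert g F) q v"
    then have "reachable (T - {g}) u p" "reachable (T - {g}) q v"
      using mono by simp_all
    then have "reachable (T - {g}) p q"
      using uv reachable_sym rtrancl_trans by metis
    with bridge show False ..
  qed
  moreover have "\<not> (reachable (T - insert g F) u q \<and> reachable (T - insert g F) p v)"
  proof
    assume "reachable (T - insert g F) u q \<and> reachable (T - insert g F) p v"
    then have "reachable (T - {g}) p v" "reachable (T - {g}) u q"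
      using mono by simp_all
    then have "reachable (T - {g}) p q" using reachable_sym[OF uv] by (meson rtrancl_trans)
    with bridge show False ..
  qed
  moreover have "T - insert g F = T - F - {{p, q}}" using g by blast
  ultimately show ?case using reachable_Diff_edge[OF IH, of p q] by metis
qed (simp add: assms(2))

lemma spanning_tree_exists:
  assumes "finite H" "H \<subseteq> E" "graph_connected V H"
  shows "\<exists>T\<subseteq>H. spanning_tree V E T"
  using assms
proof (induction H rule: finite_psubset_induct)
  case (psubset H)
  show ?case
  proof (cases "\<exists>e\<in>H. graph_connected V (H - {e})")
    case True
    then obtain e where e: "e \<in> H" "graph_connected V (H - {e})" by blast
    then have "H - {e} \<subset> H" by blast
    then obtain T where "T \<subseteq> H - {e}" "spanning_tree V E T"
      using psubset.IH[of "H - {e}"] psubset.prems e(2) by auto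
    then show ?thesis by blast
  next
    case False
    with psubset.prems show ?thesis unfolding spanning_tree_def by blast
  qed
qed

lemma finite_spanning_tree_weights:
  "finite E \<Longrightarrow> finite {(\<Sum>e\<in>T. w e) | T. spanning_tree V E T}"
proof -
  assume "finite E"
  then have "finite {T. spanning_tree V E T}"
    by (rule finite_subset[rotated, OF finite_Pow_iff[THEN iffD2]]) (auto simp: spanning_tree_def)
  then show ?thesis by simp
qed

lemma mst_weight_le:
  "finite E \<Longrightarrow> spanning_tree V E T \<Longrightarrow> mst_weight V E w \<le> (\<Sum>e\<in>T. w e)"
  unfolding mst_weight_def by (rule Min_le) (auto intro: finite_spanning_tree_weights)

lemma mst_weight_attained:
  assumes "finite E" "graph_connected V E"
  obtains T where "spanning_tree V E T" "mst_weight V E w = (\<Sum>e\<in>T. w e)"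
proof -
  obtain T where "spanning_tree V E T" using spanning_tree_exists[OF assms(1) order_refl assms(2)] by blast
  then have "{(\<Sum>e\<in>T. w e) | T. spanning_tree V E T} \<noteq> {}" by blast
  from Min_in[OF finite_spanning_tree_weights[OF assms(1)] this] show ?thesis
    using that unfolding mst_weight_def by auto
qed

lemma mst_weight_le_connected:
  assumes "finite E" "H \<subseteq> E" "graph_connected V H" "\<And>e. e \<in> H \<Longrightarrow> 0 \<le> w e"
  shows "mst_weight V E w \<le> (\<Sum>e\<in>H. w e)"
proof -
  have "finite H" using assms(1,2) by (rule finite_subset[rotated])
  then obtain T where T: "T \<subseteq> H" "spanning_tree V E T"
    using spanning_tree_exists[OF _ assms(2,3)] by blast
  have "mst_weight V E w \<le> (\<Sum>e\<in>T. w e)" by (rule mst_weight_le[OF assms(1) T(2)])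
  also have "\<dots> \<le> (\<Sum>e\<in>H. w e)" using \<open>finite H\<close> T(1) assms(4) by (intro sum_mono2) auto
  finally show ?thesis .
qed

lemma reachable_Diff_edge_sides:
  assumes "graph_connected V H" "a \<in> V" "y \<in> V"
  shows "reachable (H - {{a, b}}) a y \<or> reachable (H - {{a, b}}) b y"
  using reachable_Diff_edge[where p = a and q = b] assms unfolding graph_connected_iff by blast

lemma graph_connected_insert_edge:
  assumes "a \<in> V" "\<forall>y\<in>V. reachable R a y \<or> reachable R b y"
    and "reachable R a p" "reachable R b q"
  shows "graph_connected V (insert {p, q} R)"
proof (rule graph_connectedI[OF assms(1)])
  let ?H = "insert {p, q} R"
  have mono: "reachable ?H x y" if "reachable R x y" for x y
    by (rule reachable_mono[OF _ that]) blast
  have "reachable ?H a p" "reachable ?H p q" "reachable ?H q b"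
    using assms(3,4) by (auto intro: mono reachable_sym reachable_edge)
  then have ab: "reachable ?H a b" by (meson rtrancl_trans)
  fix y assume "y \<in> V"
  then show "reachable ?H a y" using assms(2) ab mono by (meson rtrancl_trans)
qed

lemma spanning_tree_exchange:
  assumes T: "spanning_tree V E T" and pq: "{p, q} \<in> T" "p \<in> V"
    and uv: "u \<in> V" "v \<in> V" "\<not> reachable (T - {{p, q}}) u v"
  shows "graph_connected V (insert {u, v} (T - {{p, q}}))"
proof -
  let ?R = "T - {{p, q}}"
  have "graph_connected V T" using T unfolding spanning_tree_def by blast
  then have sides: "\<forall>y\<in>V. reachable ?R p y \<or> reachable ?R q y"
    using reachable_Diff_edge_sides pq(2) by metis
  have "\<not> (reachable ?R x u \<and> reachable ?R x v)" for x
  proof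
    assume "reachable ?R x u \<and> reachable ?R x v"
    then have "reachable ?R u v" by (meson reachable_sym rtrancl_trans)
    with uv(3) show False ..
  qed
  then consider "reachable ?R p u" "reachable ?R q v" | "reachable ?R p v" "reachable ?R q u"
    using sides uv(1,2) by blast
  then show ?thesis
  proof cases
    case 1
    show ?thesis using graph_connected_insert_edge[OF pq(2) sides 1] .
  next
    case 2
    show ?thesis using graph_connected_insert_edge[OF pq(2) sides 2] by (simp add: insert_commute)
  qed
qed

lemma spanning_tree_crossing_bridge:
  assumes T: "spanning_tree V E T" "finite T"
    and uv: "reachable T u v" "u \<in> S" "v \<notin> S"
  obtains p q where "{p, q} \<in> T" "p \<in> S" "q \<notin> S" "\<not> reachable (T - {{p, q}}) u v"
proof -
  define C where "C = {g \<in> T. \<exists>p\<in>S. \<exists>q. q \<notin> S \<and> g = {p, q}}"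
  \<comment> \<open>Without the edges of C the walk from u cannot leave S; as each of them is a bridge,
    one of them alone must already separate u from v.\<close>
  have "\<exists>g\<in>C. \<not> reachable (T - {g}) u v"
  proof (rule ccontr)
    assume "\<not> ?thesis"
    moreover have "\<forall>g\<in>C. \<exists>p q. g = {p, q} \<and> \<not> reachable (T - {g}) p q"
      using spanning_tree_edge_is_bridge[OF T(1)] unfolding C_def by blast
    moreover have "finite C" using T(2) unfolding C_def by (rule rev_finite_subset) blast
    ultimately have "reachable (T - C) u v" using reachable_Diff_bridges[OF _ uv(1)] by blast
    then obtain p q where "{p, q} \<in> T - C" "p \<in> S" "q \<notin> S"
      using uv(2,3) by (rule reachable_crossing_edge)
    then show False unfolding C_def by blast
  qed
  then show ?thesis using that unfolding C_def by blast
qed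

lemma mst_weight_le_insert:
  assumes "finite E" "insert g R \<subseteq> E" "graph_connected V (insert g R)"
    and "\<And>e. e \<in> E \<Longrightarrow> 0 \<le> w e"
  shows "mst_weight V E w \<le> w g + (\<Sum>e\<in>R. w e)"
proof -
  have "finite R" using assms(1,2) by (meson finite_subset subset_insertI2 insert_subset)
  have "mst_weight V E w \<le> (\<Sum>e\<in>insert g R. w e)"
    using assms by (intro mst_weight_le_connected) auto
  also have "\<dots> \<le> w g + (\<Sum>e\<in>R. w e)"
    using \<open>finite R\<close> assms(2,4) by (simp add: sum.insert_if)
  finally show ?thesis .
qed

lemma edges_onE:
  assumes "e \<in> edges_on V"
  obtains u v where "e = {u, v}" "u \<in> V" "v \<in> V" "u \<noteq> v"
  using assms unfolding edges_on_def by (auto simp: card_2_iff)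

lemma max_or0_le: "(\<And>a. a \<in> A \<Longrightarrow> a \<le> c) \<Longrightarrow> 0 \<le> c \<Longrightarrow> max_or0 A \<le> c"
  unfolding max_or0_def by (auto intro: cSup_least)

lemma le_max_or0: "a \<in> A \<Longrightarrow> bdd_above A \<Longrightarrow> a \<le> max_or0 A"
  unfolding max_or0_def by (auto intro: cSup_upper)

lemma max_or0_nonneg: "(\<And>a. a \<in> A \<Longrightarrow> 0 \<le> a) \<Longrightarrow> bdd_above A \<Longrightarrow> 0 \<le> max_or0 A"
proof (cases "A = {}")
  case False
  then obtain a where "a \<in> A" by blast
  moreover assume "\<And>a. a \<in> A \<Longrightarrow> 0 \<le> a" "bdd_above A"
  ultimately show ?thesis by (meson le_max_or0 order_trans)
qed (simp add: max_or0_def)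

definition max_nonedge_cut_weight :: "'a set \<Rightarrow> 'a set set \<Rightarrow> ('a set \<Rightarrow> real) \<Rightarrow> real" where
  "max_nonedge_cut_weight V E w =
    max_or0 {cut_min_weight V E w S | S. S \<subseteq> V \<and> (\<exists>u\<in>S. \<exists>v\<in>V - S. {u, v} \<notin> E)}"

locale connected_weighted_graph =
  fixes V :: "'a set" and E :: "'a set set" and w :: "'a set \<Rightarrow> real" and B :: real
  assumes finite_vertices: "finite V"
    and weighted: "weighted_graph V E w B"
    and connected: "graph_connected V E"
begin

lemma edges_subset: "E \<subseteq> edges_on V"
  using weighted by (simp add: weighted_graph_def)

lemma weight_nonneg: "e \<in> E \<Longrightarrow> 0 \<le> w e"
  using weighted by (simp add: weighted_graph_def)

lemma weight_le_bound: "e \<in> E \<Longrightarrow> w e \<le> B"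
  using weighted by (simp add: weighted_graph_def)

lemma finite_edges: "finite E"
proof (rule finite_subset[OF edges_subset])
  have "edges_on V \<subseteq> Pow V" by (auto simp: edges_on_def)
  then show "finite (edges_on V)" using finite_vertices by (simp add: finite_subset)
qed

lemma edge_in_vertices: "{p, q} \<in> E \<Longrightarrow> q \<in> V"
  using edges_subset by (auto simp: edges_on_def)

lemma cut_min_weight_attained:
  assumes "u \<in> S" "u \<in> V" "v \<in> V - S"
  obtains p q where "{p, q} \<in> E" "p \<in> S" "q \<in> V - S" "w {p, q} = cut_min_weight V E w S"
proof -
  let ?C = "{w e | e. e \<in> E \<and> (\<exists>u\<in>S. \<exists>v\<in>V - S. e = {u, v})}"
  have "reachable E u v" using connected assms by (simp add: graph_connected_iff)
  then obtain p q where "{p, q} \<in> E" "p \<in> S" "q \<notin> S"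
    using assms(1,3) by (auto elim: reachable_crossing_edge)
  then have "?C \<noteq> {}" using edge_in_vertices by blast
  then have "cut_min_weight V E w S \<in> ?C"
    unfolding cut_min_weight_def using finite_edges by (intro Min_in) auto
  then show ?thesis using that by fastforce
qed

lemma cut_min_weight_le:
  "{p, q} \<in> E \<Longrightarrow> p \<in> S \<Longrightarrow> q \<in> V - S \<Longrightarrow> cut_min_weight V E w S \<le> w {p, q}"
  unfolding cut_min_weight_def using finite_edges by (intro Min_le) auto

lemma cut_min_weight_nonneg:
  "u \<in> S \<Longrightarrow> u \<in> V \<Longrightarrow> v \<in> V - S \<Longrightarrow> 0 \<le> cut_min_weight V E w S"
  by (metis cut_min_weight_attained weight_nonneg)

lemma cut_min_weight_le_bound:
  "u \<in> S \<Longrightarrow> u \<in> V \<Longrightarrow> v \<in> V - S \<Longrightarrow> cut_min_weight V E w S \<le> B"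
  by (metis cut_min_weight_attained weight_le_bound)

lemma nonedge_cut_weights_bounded:
  "bdd_above {cut_min_weight V E w S | S. S \<subseteq> V \<and> (\<exists>u\<in>S. \<exists>v\<in>V - S. {u, v} \<notin> E)}"
  by (rule bdd_aboveI[of _ B]) (auto intro: cut_min_weight_le_bound)

lemma cut_min_weight_le_max:
  "S \<subseteq> V \<Longrightarrow> u \<in> S \<Longrightarrow> v \<in> V - S \<Longrightarrow> {u, v} \<notin> E
    \<Longrightarrow> cut_min_weight V E w S \<le> max_nonedge_cut_weight V E w"
  unfolding max_nonedge_cut_weight_def by (rule le_max_or0[OF _ nonedge_cut_weights_bounded]) blast

lemma max_nonedge_cut_weight_nonneg: "0 \<le> max_nonedge_cut_weight V E w"
  unfolding max_nonedge_cut_weight_def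
  by (rule max_or0_nonneg[OF _ nonedge_cut_weights_bounded]) (auto intro: cut_min_weight_nonneg)

lemma max_nonedge_cut_weight_le_bound: "0 \<le> B \<Longrightarrow> max_nonedge_cut_weight V E w \<le> B"
  unfolding max_nonedge_cut_weight_def by (rule max_or0_le) (auto intro: cut_min_weight_le_bound)

lemma mst_weight_insert_edge_le:
  assumes "e \<notin> E"
  shows "mst_weight V (insert e E) (w(e := x)) \<le> mst_weight V E w"
proof -
  obtain T where T: "spanning_tree V E T" "mst_weight V E w = (\<Sum>f\<in>T. w f)"
    using mst_weight_attained[OF finite_edges connected] by blast
  then have "spanning_tree V (insert e E) T" "e \<notin> T"
    using assms unfolding spanning_tree_def by blast+
  then have "mst_weight V (insert e E) (w(e := x)) \<le> (\<Sum>f\<in>T. (w(e := x)) f)"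
    using finite_edges by (intro mst_weight_le) auto
  also have "\<dots> = (\<Sum>f\<in>T. w f)" using \<open>e \<notin> T\<close> by (intro sum.cong) auto
  finally show ?thesis using T(2) by simp
qed

lemma mst_weight_le_reconnect:
  assumes RE: "R \<subseteq> E" and uv: "u \<in> V" "v \<in> V" "{u, v} \<notin> E"
    and sides: "\<forall>y\<in>V. reachable R u y \<or> reachable R v y"
  shows "mst_weight V E w \<le> max_nonedge_cut_weight V E w + (\<Sum>f\<in>R. w f)"
proof (cases "reachable R u v")
  case True
  then have "graph_connected V R"
    using sides by (intro graph_connectedI[OF uv(1)]) (meson rtrancl_trans)
  then have "mst_weight V E w \<le> (\<Sum>f\<in>R. w f)"
    using RE weight_nonneg by (intro mst_weight_le_connected[OF finite_edges RE]) auto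
  then show ?thesis using max_nonedge_cut_weight_nonneg by linarith
next
  case False
  define A where "A = {y \<in> V. reachable R u y}"
  have A: "u \<in> A" "v \<in> V - A" using uv(1,2) False by (simp_all add: A_def)
  obtain p q where pq: "{p, q} \<in> E" "p \<in> A" "q \<in> V - A"
    and cut: "w {p, q} = cut_min_weight V E w A"
    by (rule cut_min_weight_attained[OF A(1) uv(1) A(2)])
  have "reachable R u p" "reachable R v q" using pq(2,3) sides by (auto simp: A_def)
  then have "graph_connected V (insert {p, q} R)"
    by (rule graph_connected_insert_edge[OF uv(1) sides])
  then have "mst_weight V E w \<le> w {p, q} + (\<Sum>f\<in>R. w f)"
    using RE pq(1) by (intro mst_weight_le_insert finite_edges weight_nonneg) auto
  moreover have "w {p, q} \<le> max_nonedge_cut_weight V E w"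
    unfolding cut using A uv(3) by (intro cut_min_weight_le_max) (auto simp: A_def)
  ultimately show ?thesis by linarith
qed

lemma mst_weight_drop_le_max_nonedge_cut:
  assumes uv: "u \<in> V" "v \<in> V" "{u, v} \<notin> E" and x: "0 \<le> x"
  shows "mst_weight V E w - mst_weight V (insert {u, v} E) (w({u, v} := x))
    \<le> max_nonedge_cut_weight V E w"
proof -
  define e E' w' where "e = {u, v}" and "E' = insert e E" and "w' = w(e := x)"
  have "finite E'" using finite_edges by (simp add: E'_def)
  moreover have "graph_connected V E'"
    using connected reachable_mono[of E E'] unfolding graph_connected_iff E'_def by blast
  ultimately obtain T where T: "spanning_tree V E' T" "mst_weight V E' w' = (\<Sum>f\<in>T. w' f)"
    using mst_weight_attained by blast
  define R where "R = T - {e}"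
  have RE: "R \<subseteq> E" using T(1) by (auto simp: spanning_tree_def R_def E'_def)
  have "(\<Sum>f\<in>R. w f) = (\<Sum>f\<in>R. w' f)"
    using RE uv(3) by (intro sum.cong) (auto simp: w'_def e_def)
  also have "\<dots> \<le> (\<Sum>f\<in>T. w' f)"
    using T(1) finite_subset[OF _ \<open>finite E'\<close>] x
    by (intro sum_mono2) (auto simp: spanning_tree_def R_def w'_def)
  finally have R_le: "(\<Sum>f\<in>R. w f) \<le> mst_weight V E' w'" using T(2) by simp
  have "graph_connected V T" using T(1) by (simp add: spanning_tree_def)
  then have "\<forall>y\<in>V. reachable R u y \<or> reachable R v y"
    using reachable_Diff_edge_sides uv(1) unfolding R_def e_def by metis
  then have "mst_weight V E w \<le> max_nonedge_cut_weight V E w + (\<Sum>f\<in>R. w f)"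
    by (rule mst_weight_le_reconnect[OF RE uv])
  with R_le show ?thesis unfolding E'_def w'_def e_def by linarith
qed

lemma mst_weight_drop_bounds:
  assumes "e \<in> edges_on V" "e \<notin> E" "0 \<le> x"
  shows "0 \<le> mst_weight V E w - mst_weight V (insert e E) (w(e := x))"
    and "mst_weight V E w - mst_weight V (insert e E) (w(e := x)) \<le> max_nonedge_cut_weight V E w"
proof -
  show "0 \<le> mst_weight V E w - mst_weight V (insert e E) (w(e := x))"
    using mst_weight_insert_edge_le[OF assms(2)] by simp
  obtain u v where "e = {u, v}" "u \<in> V" "v \<in> V" using assms(1) by (rule edges_onE)
  then show "mst_weight V E w - mst_weight V (insert e E) (w(e := x)) \<le> max_nonedge_cut_weight V E w"
    using mst_weight_drop_le_max_nonedge_cut assms(2,3) by blast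
qed

lemma cut_min_weight_le_mst_weight_drop:
  assumes S: "S \<subseteq> V" "u \<in> S" "v \<in> V - S" and uv: "{u, v} \<notin> E"
  shows "cut_min_weight V E w S \<le> mst_weight V E w - mst_weight V (insert {u, v} E) (w({u, v} := 0))"
proof -
  define e E' w' where "e = {u, v}" and "E' = insert e E" and "w' = w(e := 0)"
  obtain T where T: "spanning_tree V E T" "mst_weight V E w = (\<Sum>f\<in>T. w f)"
    using mst_weight_attained[OF finite_edges connected] by blast
  have TE: "T \<subseteq> E" using T(1) by (simp add: spanning_tree_def)
  have "finite T" using finite_edges TE by (rule rev_finite_subset)
  have uV: "u \<in> V" and vV: "v \<in> V" "v \<notin> S" using S by auto
  have "reachable T u v"
    using T(1) uV vV unfolding spanning_tree_def graph_connected_iff by blast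
  then obtain p q where pq: "{p, q} \<in> T" "p \<in> S" "q \<notin> S"
    and sep: "\<not> reachable (T - {{p, q}}) u v"
    by (rule spanning_tree_crossing_bridge[OF T(1) \<open>finite T\<close> _ S(2) vV(2)])
  define R where "R = T - {{p, q}}"
  have "p \<in> V" using pq(2) S(1) by blast
  have "q \<in> V" using pq(1) TE edge_in_vertices by blast
  have "graph_connected V (insert e R)"
    unfolding e_def R_def by (rule spanning_tree_exchange[OF T(1) pq(1) \<open>p \<in> V\<close> uV vV(1) sep])
  moreover have "insert e R \<subseteq> E'" using TE by (auto simp: E'_def R_def)
  moreover have "finite E'" using finite_edges by (simp add: E'_def)
  ultimately have "mst_weight V E' w' \<le> w' e + (\<Sum>f\<in>R. w' f)"
    using weight_nonneg by (intro mst_weight_le_insert) (auto simp: E'_def w'_def)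
  also have "\<dots> = (\<Sum>f\<in>R. w f)"
  proof -
    have "e \<notin> R" using TE uv by (auto simp: e_def R_def)
    then show ?thesis unfolding w'_def by (auto intro: sum.cong)
  qed
  also have "\<dots> = mst_weight V E w - w {p, q}"
    unfolding R_def T(2) using \<open>finite T\<close> pq(1) by (simp add: sum_diff1)
  finally show ?thesis
    using cut_min_weight_le[OF _ pq(2)] pq(1) TE \<open>q \<in> V\<close> pq(3)
    unfolding E'_def w'_def e_def by fastforce
qed

lemma RS_mst_eq_max_nonedge_cut_weight:
  assumes "0 \<le> B"
  shows "RS_mst V E w B = max_nonedge_cut_weight V E w"
proof -
  let ?D = "{\<bar>mst_weight V E w - mst_weight V (insert e E) (w(e := x))\<bar> | e x.
      e \<in> edges_on V \<and> e \<notin> E \<and> 0 \<le> x \<and> x \<le> B}"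
  have D_bounds: "0 \<le> d \<and> d \<le> max_nonedge_cut_weight V E w" if "d \<in> ?D" for d
  proof -
    obtain e x where d: "d = \<bar>mst_weight V E w - mst_weight V (insert e E) (w(e := x))\<bar>"
      and e: "e \<in> edges_on V" "e \<notin> E" and x: "0 \<le> x"
      using \<open>d \<in> ?D\<close> by blast
    show ?thesis using d mst_weight_drop_bounds[OF e x] by linarith
  qed
  then have "bdd_above ?D" by (meson bdd_aboveI)
  have "RS_mst V E w B \<le> max_nonedge_cut_weight V E w"
    unfolding RS_mst_def using D_bounds max_nonedge_cut_weight_nonneg by (intro max_or0_le) auto
  moreover have "max_nonedge_cut_weight V E w \<le> RS_mst V E w B"
    unfolding max_nonedge_cut_weight_def
  proof (rule max_or0_le)
    fix c assume "c \<in> {cut_min_weight V E w S | S. S \<subseteq> V \<and> (\<exists>u\<in>S. \<exists>v\<in>V - S. {u, v} \<notin> E)}"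
    then obtain S u v where c: "c = cut_min_weight V E w S"
      and S: "S \<subseteq> V" "u \<in> S" "v \<in> V - S" "{u, v} \<notin> E" by blast
    have "{u, v} \<in> edges_on V" using S by (auto simp: edges_on_def card_2_iff)
    then have "\<bar>mst_weight V E w - mst_weight V (insert {u, v} E) (w({u, v} := 0))\<bar> \<in> ?D"
      using S(4) assms by blast
    then show "c \<le> RS_mst V E w B"
      unfolding c RS_mst_def using cut_min_weight_le_mst_weight_drop[OF S] \<open>bdd_above ?D\<close>
      by (meson abs_ge_self le_max_or0 order_trans)
  next
    show "0 \<le> RS_mst V E w B"
      unfolding RS_mst_def using D_bounds \<open>bdd_above ?D\<close> by (intro max_or0_nonneg) auto
  qed
  ultimately show ?thesis by linarith
qed

end

lemma card_ge_3E:
  assumes "card V \<ge> 3"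
  obtains a b c where "a \<in> V" "b \<in> V" "c \<in> V" "a \<noteq> b" "a \<noteq> c" "b \<noteq> c"
proof -
  obtain T where "T \<subseteq> V" "card T = 3" using obtain_subset_with_card_n[OF assms] by blast
  then show ?thesis using that by (auto simp: card_3_iff)
qed

lemma star_graph:
  assumes "c \<in> V" "0 \<le> B"
  shows "weighted_graph V {{c, y} | y. y \<in> V - {c}} (\<lambda>_. B) B"
    and "graph_connected V {{c, y} | y. y \<in> V - {c}}"
proof -
  show "weighted_graph V {{c, y} | y. y \<in> V - {c}} (\<lambda>_. B) B"
    using assms by (auto simp: weighted_graph_def edges_on_def)
  have "reachable {{c, y} | y. y \<in> V - {c}} c y" if "y \<in> V" for y
    using that by (cases "y = c") (auto intro: reachable_edge)
  then show "graph_connected V {{c, y} | y. y \<in> V - {c}}"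
    by (rule graph_connectedI[OF assms(1)])
qed

lemma mst_weight_drop_star:
  assumes "finite V" "a \<in> V" "b \<in> V" "c \<in> V" "a \<noteq> b" "a \<noteq> c" "b \<noteq> c" "0 \<le> B"
  defines "St \<equiv> {{c, y} | y. y \<in> V - {c}}"
  shows "mst_weight V St (\<lambda>_. B) - mst_weight V (insert {a, b} St) ((\<lambda>_. B)({a, b} := 0)) = B"
proof -
  interpret connected_weighted_graph V St "\<lambda>_. B" B
    using assms(1) star_graph[OF assms(4,8)] unfolding St_def by unfold_locales
  have ab: "{a, b} \<in> edges_on V" "{a, b} \<notin> St"
    using assms(2-7) by (auto simp: edges_on_def St_def doubleton_eq_iff)
  \<comment> \<open>All weights equal B, so every cut has minimum crossing weight B.\<close>
  have "B = cut_min_weight V St (\<lambda>_. B) {a}"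
    using assms(2,3,5) by (metis cut_min_weight_attained Diff_iff singletonD singletonI)
  also have "\<dots> \<le> mst_weight V St (\<lambda>_. B) - mst_weight V (insert {a, b} St) ((\<lambda>_. B)({a, b} := 0))"
    using assms(2,3,5) ab(2) by (intro cut_min_weight_le_mst_weight_drop) auto
  finally show ?thesis
    using mst_weight_drop_bounds(2)[OF ab order_refl] max_nonedge_cut_weight_le_bound[OF assms(8)]
    by linarith
qed

lemma GS_mst_eq:
  assumes "card V \<ge> 3" "0 \<le> B"
  shows "GS_mst V B = B"
proof -
  have "finite V" using assms(1) by (metis card.infinite not_numeral_le_zero)
  let ?G = "{\<bar>mst_weight V E w - mst_weight V (insert e E) (w(e := x))\<bar> | E w e x.
      weighted_graph V E w B \<and> graph_connected V E \<and>
      e \<in> edges_on V \<and> e \<notin> E \<and> 0 \<le> x \<and> x \<le> B}"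
  have "B \<in> ?G"
  proof -
    obtain a b c where abc: "a \<in> V" "b \<in> V" "c \<in> V" "a \<noteq> b" "a \<noteq> c" "b \<noteq> c"
      using assms(1) by (rule card_ge_3E)
    define St where "St = {{c, y} | y. y \<in> V - {c}}"
    have "{a, b} \<in> edges_on V" "{a, b} \<notin> St"
      using abc by (auto simp: edges_on_def St_def doubleton_eq_iff)
    moreover have "B = \<bar>mst_weight V St (\<lambda>_. B) - mst_weight V (insert {a, b} St) ((\<lambda>_. B)({a, b} := 0))\<bar>"
      using mst_weight_drop_star[OF \<open>finite V\<close> abc assms(2)] assms(2) by (simp add: St_def)
    ultimately show ?thesis
      using star_graph[OF abc(3) assms(2)] assms(2) unfolding St_def by blast
  qed
  moreover have "d \<le> B" if "d \<in> ?G" for d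
  proof -
    obtain E w e x where d: "d = \<bar>mst_weight V E w - mst_weight V (insert e E) (w(e := x))\<bar>"
      and G: "weighted_graph V E w B" "graph_connected V E"
      and e: "e \<in> edges_on V" "e \<notin> E" "0 \<le> x"
      using \<open>d \<in> ?G\<close> by blast
    interpret connected_weighted_graph V E w B using \<open>finite V\<close> G by unfold_locales
    show ?thesis
      using d mst_weight_drop_bounds[OF e] max_nonedge_cut_weight_le_bound[OF assms(2)] by linarith
  qed
  ultimately show ?thesis unfolding GS_mst_def by (rule cSup_eq_maximum)
qed

theorem mainTheorem6:
  fixes V :: "'a set" and E :: "'a set set" and w :: "'a set \<Rightarrow> real" and B :: real
  assumes "finite V" and "card V \<ge> 3"
    and "weighted_graph V E w B" and "graph_connected V E"
  shows "RS_mst V E w B / GS_mst V B =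
    max_or0 {cut_min_weight V E w S | S. S \<subseteq> V \<and> (\<exists>u\<in>S. \<exists>v\<in>V - S. {u, v} \<notin> E)} / B"
proof -
  interpret connected_weighted_graph V E w B using assms by unfold_locales
  obtain a b where ab: "a \<in> V" "b \<in> V" "a \<noteq> b"
    using assms(2) by (rule card_ge_3E)
  have "0 \<le> B"
    using cut_min_weight_nonneg[of a "{a}" b] cut_min_weight_le_bound[of a "{a}" b] ab by auto
  then show ?thesis
    using RS_mst_eq_max_nonedge_cut_weight GS_mst_eq[OF assms(2)]
    unfolding max_nonedge_cut_weight_def by simp
qed

end
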